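(* In the setting below, fix a node $i\in\{1,\dots,m\}$ and $0<\epsilon<1$. Repeat $h$ times independently: prepare $|0_{G_i}\rangle|0_G\rangle$, apply $\mathrm{QFT}_{G_i}\otimes\mathrm{I}_G$, then $U_{f_i}$, then $\mathrm{QFT}_{G_i}^\dagger\otimes\mathrm{I}_G$, and measure the first register obtaining $\mathbf{m}_j\in G_i$. Let $M_h=\{\mathbf{m}_1,\dots,\mathbf{m}_h\}$ and $A_i=\{x\in G_i:\langle \mathbf{m}_j,x\rangle_i=0\ \forall j\}=(\mathrm{span}(M_h))^\perp$. Then $\Pr(A_i=K_i)\ge 1-\epsilon/m$ provided \[h\ge\mathrm{rank}(G_i)+\left\lceil\log_2\tfrac{2m}{\epsilon}\right\rceil\quad\text{or}\quad h\ge\mathrm{len}(G_i)-\mathrm{len}(K_i)+\left\lceil\log_2\tfrac{m}{\epsilon}\right\rceil.\]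
   Context: Setting: $p_1,\dots,p_m$ distinct primes, $G=G_1\oplus\cdots\oplus G_m$, $G_i=\bigoplus_{j=1}^{r_i}\mathbb{Z}_{p_i^{\alpha_{ij}}}$ ($\alpha_{ij}\ge1$); $f:G\to G$ with $f(x)=f(y)\iff x-y\in K$, $K\le G$; $K=K_1\oplus\cdots\oplus K_m$ with $K_i\le G_i$; $f_i(g_i)=f(0_1,\dots,g_i,\dots,0_m)$. $\langle x,y\rangle_i=\sum_j x_{ij}y_{ij}/p_i^{\alpha_{ij}}\pmod1$ on $G_i$; $H^\perp=\{g\in G_i:\langle h,g\rangle_i=0\ \forall h\in H\}$ for $H\le G_i$; $\mathrm{span}$ = generated subgroup. $\mathrm{rank}$ = minimal number of generators; $\mathrm{len}$ = composition length (for $|H|=p^e$, $\mathrm{len}(H)=e$). $\mathcal{H}_{G_i}$, $\mathcal{H}_G$ have computational bases indexed by $G_i$, $G$; $\mathrm{QFT}_{G_i}=\bigotimes_j\mathrm{QFT}_{p_i^{\alpha_{ij}}}$ with $\mathrm{QFT}_N|x\rangle=\frac1{\sqrt N}\sum_y e^{2\pi ixy/N}|y\rangle$; $U_{f_i}|g\rangle|b\rangle=|g\rangle|b+f_i(g)\rangle$. *)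

theory Defs
  imports "HOL-Computational_Algebra.Primes" Complex_Main
begin

(* Elements of G_i = (+)_{j<r i} Z_{p_i^{alpha i j}} : functions nat => int, supported on j < r i.
   Elements of G = (+)_{k<m} G_k : functions nat => nat => int, supported on k < m, j < r k.
   Nodes are indexed 0..m-1. *)

definition Gi :: "(nat \<Rightarrow> nat) \<Rightarrow> (nat \<Rightarrow> nat) \<Rightarrow> (nat \<Rightarrow> nat \<Rightarrow> nat) \<Rightarrow> nat \<Rightarrow> (nat \<Rightarrow> int) set" where
  "Gi p r \<alpha> i = {x. (\<forall>j<r i. 0 \<le> x j \<and> x j < int (p i ^ \<alpha> i j)) \<and> (\<forall>j\<ge>r i. x j = 0)}"

definition Gfull :: "(nat \<Rightarrow> nat) \<Rightarrow> (nat \<Rightarrow> nat) \<Rightarrow> (nat \<Rightarrow> nat \<Rightarrow> nat) \<Rightarrow> nat \<Rightarrow> (nat \<Rightarrow> nat \<Rightarrow> int) set" where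
  "Gfull p r \<alpha> m = {x. \<forall>k j. if k < m \<and> j < r k then 0 \<le> x k j \<and> x k j < int (p k ^ \<alpha> k j) else x k j = 0}"

definition gi_add :: "(nat \<Rightarrow> nat) \<Rightarrow> (nat \<Rightarrow> nat \<Rightarrow> nat) \<Rightarrow> nat \<Rightarrow> (nat \<Rightarrow> int) \<Rightarrow> (nat \<Rightarrow> int) \<Rightarrow> (nat \<Rightarrow> int)" where
  "gi_add p \<alpha> i x y = (\<lambda>j. (x j + y j) mod int (p i ^ \<alpha> i j))"

definition gi_neg :: "(nat \<Rightarrow> nat) \<Rightarrow> (nat \<Rightarrow> nat \<Rightarrow> nat) \<Rightarrow> nat \<Rightarrow> (nat \<Rightarrow> int) \<Rightarrow> (nat \<Rightarrow> int)" where
  "gi_neg p \<alpha> i x = (\<lambda>j. (- x j) mod int (p i ^ \<alpha> i j))"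

definition g_add :: "(nat \<Rightarrow> nat) \<Rightarrow> (nat \<Rightarrow> nat \<Rightarrow> nat) \<Rightarrow> (nat \<Rightarrow> nat \<Rightarrow> int) \<Rightarrow> (nat \<Rightarrow> nat \<Rightarrow> int) \<Rightarrow> (nat \<Rightarrow> nat \<Rightarrow> int)" where
  "g_add p \<alpha> x y = (\<lambda>k j. (x k j + y k j) mod int (p k ^ \<alpha> k j))"

definition g_neg :: "(nat \<Rightarrow> nat) \<Rightarrow> (nat \<Rightarrow> nat \<Rightarrow> nat) \<Rightarrow> (nat \<Rightarrow> nat \<Rightarrow> int) \<Rightarrow> (nat \<Rightarrow> nat \<Rightarrow> int)" where
  "g_neg p \<alpha> x = (\<lambda>k j. (- x k j) mod int (p k ^ \<alpha> k j))"

definition g_diff :: "(nat \<Rightarrow> nat) \<Rightarrow> (nat \<Rightarrow> nat \<Rightarrow> nat) \<Rightarrow> (nat \<Rightarrow> nat \<Rightarrow> int) \<Rightarrow> (nat \<Rightarrow> nat \<Rightarrow> int) \<Rightarrow> (nat \<Rightarrow> nat \<Rightarrow> int)" where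
  "g_diff p \<alpha> x y = g_add p \<alpha> x (g_neg p \<alpha> y)"

definition embed :: "nat \<Rightarrow> (nat \<Rightarrow> int) \<Rightarrow> (nat \<Rightarrow> nat \<Rightarrow> int)" where
  "embed i g = (\<lambda>k j. if k = i then g j else 0)"

definition is_subgrp :: "'a set \<Rightarrow> ('a \<Rightarrow> 'a \<Rightarrow> 'a) \<Rightarrow> ('a \<Rightarrow> 'a) \<Rightarrow> 'a \<Rightarrow> 'a set \<Rightarrow> bool" where
  "is_subgrp C add neg z H \<longleftrightarrow> H \<subseteq> C \<and> z \<in> H \<and> (\<forall>x\<in>H. \<forall>y\<in>H. add x y \<in> H) \<and> (\<forall>x\<in>H. neg x \<in> H)"

definition Gi_span :: "(nat \<Rightarrow> nat) \<Rightarrow> (nat \<Rightarrow> nat) \<Rightarrow> (nat \<Rightarrow> nat \<Rightarrow> nat) \<Rightarrow> nat \<Rightarrow> (nat \<Rightarrow> int) set \<Rightarrow> (nat \<Rightarrow> int) set" where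
  "Gi_span p r \<alpha> i S = \<Inter> {H. is_subgrp (Gi p r \<alpha> i) (gi_add p \<alpha> i) (gi_neg p \<alpha> i) (\<lambda>_. 0) H \<and> S \<subseteq> H}"

definition Gi_rank :: "(nat \<Rightarrow> nat) \<Rightarrow> (nat \<Rightarrow> nat) \<Rightarrow> (nat \<Rightarrow> nat \<Rightarrow> nat) \<Rightarrow> nat \<Rightarrow> (nat \<Rightarrow> int) set \<Rightarrow> nat" where
  "Gi_rank p r \<alpha> i H = (LEAST n. \<exists>S. finite S \<and> card S = n \<and> S \<subseteq> H \<and> Gi_span p r \<alpha> i S = H)"

text \<open>Composition length of a p-group: len H = e where card H = q^e.\<close>
definition plen :: "nat \<Rightarrow> 'a set \<Rightarrow> nat" where
  "plen q H = (THE e. card H = q ^ e)"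

definition ip :: "(nat \<Rightarrow> nat) \<Rightarrow> (nat \<Rightarrow> nat) \<Rightarrow> (nat \<Rightarrow> nat \<Rightarrow> nat) \<Rightarrow> nat \<Rightarrow> (nat \<Rightarrow> int) \<Rightarrow> (nat \<Rightarrow> int) \<Rightarrow> real" where
  "ip p r \<alpha> i x y = frac (\<Sum>j<r i. real_of_int (x j * y j) / real (p i ^ \<alpha> i j))"

definition qft_entry :: "nat \<Rightarrow> int \<Rightarrow> int \<Rightarrow> complex" where
  "qft_entry N x y = complex_of_real (1 / sqrt (real N)) * exp (2 * complex_of_real pi * \<i> * of_int (x * y) / of_nat N)"

text \<open>QFT_{G_i} is the tensor product of the QFT_{p_i^alpha_ij}: entry <y|QFT_{G_i}|x>.\<close>
definition qftGi_entry :: "(nat \<Rightarrow> nat) \<Rightarrow> (nat \<Rightarrow> nat) \<Rightarrow> (nat \<Rightarrow> nat \<Rightarrow> nat) \<Rightarrow> nat \<Rightarrow> (nat \<Rightarrow> int) \<Rightarrow> (nat \<Rightarrow> int) \<Rightarrow> complex" where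
  "qftGi_entry p r \<alpha> i x y = (\<Prod>j<r i. qft_entry (p i ^ \<alpha> i j) (x j) (y j))"

text \<open>States of H_{G_i} (x) H_G: amplitude functions on basis pairs (g, b), g in G_i, b in G.\<close>
type_synonym state = "((nat \<Rightarrow> int) \<times> (nat \<Rightarrow> nat \<Rightarrow> int)) \<Rightarrow> complex"

definition init_state :: state where
  "init_state = (\<lambda>(g, b). if g = (\<lambda>_. 0) \<and> b = (\<lambda>_ _. 0) then 1 else 0)"

definition qft_I :: "(nat \<Rightarrow> nat) \<Rightarrow> (nat \<Rightarrow> nat) \<Rightarrow> (nat \<Rightarrow> nat \<Rightarrow> nat) \<Rightarrow> nat \<Rightarrow> state \<Rightarrow> state" where
  "qft_I p r \<alpha> i v = (\<lambda>(y, b). \<Sum>x\<in>Gi p r \<alpha> i. qftGi_entry p r \<alpha> i x y * v (x, b))"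

definition qft_dag_I :: "(nat \<Rightarrow> nat) \<Rightarrow> (nat \<Rightarrow> nat) \<Rightarrow> (nat \<Rightarrow> nat \<Rightarrow> nat) \<Rightarrow> nat \<Rightarrow> state \<Rightarrow> state" where
  "qft_dag_I p r \<alpha> i v = (\<lambda>(y, b). \<Sum>x\<in>Gi p r \<alpha> i. cnj (qftGi_entry p r \<alpha> i y x) * v (x, b))"

text \<open>U_{f_i} |g>|b> = |g>|b + f_i(g)>, acting on amplitudes.\<close>
definition U_f :: "(nat \<Rightarrow> nat) \<Rightarrow> (nat \<Rightarrow> nat) \<Rightarrow> (nat \<Rightarrow> nat \<Rightarrow> nat) \<Rightarrow> nat \<Rightarrow> nat \<Rightarrow> ((nat \<Rightarrow> int) \<Rightarrow> (nat \<Rightarrow> nat \<Rightarrow> int)) \<Rightarrow> state \<Rightarrow> state" where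
  "U_f p r \<alpha> m i fi v = (\<lambda>(g, c). if g \<in> Gi p r \<alpha> i \<and> c \<in> Gfull p r \<alpha> m
      then v (g, g_diff p \<alpha> c (fi g)) else 0)"

definition f_node :: "((nat \<Rightarrow> nat \<Rightarrow> int) \<Rightarrow> (nat \<Rightarrow> nat \<Rightarrow> int)) \<Rightarrow> nat \<Rightarrow> (nat \<Rightarrow> int) \<Rightarrow> (nat \<Rightarrow> nat \<Rightarrow> int)" where
  "f_node f i g = f (embed i g)"

definition out_state :: "(nat \<Rightarrow> nat) \<Rightarrow> (nat \<Rightarrow> nat) \<Rightarrow> (nat \<Rightarrow> nat \<Rightarrow> nat) \<Rightarrow> nat \<Rightarrow> ((nat \<Rightarrow> nat \<Rightarrow> int) \<Rightarrow> (nat \<Rightarrow> nat \<Rightarrow> int)) \<Rightarrow> nat \<Rightarrow> state" where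
  "out_state p r \<alpha> m f i = qft_dag_I p r \<alpha> i (U_f p r \<alpha> m i (f_node f i) (qft_I p r \<alpha> i init_state))"

definition meas_prob :: "(nat \<Rightarrow> nat) \<Rightarrow> (nat \<Rightarrow> nat) \<Rightarrow> (nat \<Rightarrow> nat \<Rightarrow> nat) \<Rightarrow> nat \<Rightarrow> ((nat \<Rightarrow> nat \<Rightarrow> int) \<Rightarrow> (nat \<Rightarrow> nat \<Rightarrow> int)) \<Rightarrow> nat \<Rightarrow> (nat \<Rightarrow> int) \<Rightarrow> real" where
  "meas_prob p r \<alpha> m f i y = (\<Sum>b\<in>Gfull p r \<alpha> m. (cmod (out_state p r \<alpha> m f i (y, b)))\<^sup>2)"

definition A_set :: "(nat \<Rightarrow> nat) \<Rightarrow> (nat \<Rightarrow> nat) \<Rightarrow> (nat \<Rightarrow> nat \<Rightarrow> nat) \<Rightarrow> nat \<Rightarrow> (nat \<Rightarrow> int) list \<Rightarrow> (nat \<Rightarrow> int) set" where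
  "A_set p r \<alpha> i ms = {x \<in> Gi p r \<alpha> i. \<forall>mj\<in>set ms. ip p r \<alpha> i mj x = 0}"

definition K_node :: "(nat \<Rightarrow> nat) \<Rightarrow> (nat \<Rightarrow> nat) \<Rightarrow> (nat \<Rightarrow> nat \<Rightarrow> nat) \<Rightarrow> (nat \<Rightarrow> nat \<Rightarrow> int) set \<Rightarrow> nat \<Rightarrow> (nat \<Rightarrow> int) set" where
  "K_node p r \<alpha> K i = {g \<in> Gi p r \<alpha> i. embed i g \<in> K}"

definition success_prob :: "(nat \<Rightarrow> nat) \<Rightarrow> (nat \<Rightarrow> nat) \<Rightarrow> (nat \<Rightarrow> nat \<Rightarrow> nat) \<Rightarrow> nat \<Rightarrow> ((nat \<Rightarrow> nat \<Rightarrow> int) \<Rightarrow> (nat \<Rightarrow> nat \<Rightarrow> int)) \<Rightarrow> (nat \<Rightarrow> nat \<Rightarrow> int) set \<Rightarrow> nat \<Rightarrow> nat \<Rightarrow> real" where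
  "success_prob p r \<alpha> m f K i h =
     (\<Sum>ms\<in>{ms. length ms = h \<and> set ms \<subseteq> Gi p r \<alpha> i \<and> A_set p r \<alpha> i ms = K_node p r \<alpha> K i}.
        prod_list (map (meas_prob p r \<alpha> m f i) ms))"

end

theory Submission
  imports Defs "HOL-Library.FuncSet"
begin

text \<open>
  Write G, p and K for G_i, p_i and K_i, and H for the annihilator of K.  After the circuit,
  the amplitude of |y>|b> is a character sum over the fibre of f_i above b, which is a coset
  of K; it vanishes unless y lies in H, so every run returns a uniformly distributed element
  of H.  Hence the failure probability is the fraction of h-tuples in H whose annihilator is
  strictly larger than K.  Such a tuple is orthogonal to a whole coset x + K inside W - K,
  where W = {x. p x \<in> K} (scale_preimage below), whereas a fixed x outside K is orthogonal
  to at most a 1/p fraction of H.  Double counting bounds the failure probability by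
  |W| / (|K| p^h).  Finally |W| \<le> |G| = p^len(G), and |W| \<le> p^rank(G) |K| because
  pairing with a minimal generating set embeds the p-torsion of G into (Z/p)^rank(G).
\<close>

lemma cis_2pi_add_Ints: "k \<in> \<int> \<Longrightarrow> cis (2 * pi * (t + k)) = cis (2 * pi * t)"
  by (simp add: distrib_left cis_mult[symmetric] cis_multiple_2pi)

lemma cis_2pi_eq_1_iff: "cis (2 * pi * t) = 1 \<longleftrightarrow> t \<in> \<int>"
proof
  assume "cis (2 * pi * t) = 1"
  then have "cos (2 * pi * t) = 1" by (metis cis.sel(1) one_complex.sel(1))
  then obtain k :: int where "2 * pi * t = real_of_int k * 2 * pi" using cos_one_2pi_int by blast
  then show "t \<in> \<int>" by simp
qed (use cis_multiple_2pi in auto)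

lemma prod_cis: "finite A \<Longrightarrow> (\<Prod>j\<in>A. cis (g j)) = cis (\<Sum>j\<in>A. g j)"
  by (induction A rule: finite_induct) (auto simp: cis_mult)

lemma qft_entry_eq_cis:
  "qft_entry n a b = of_real (1 / sqrt (real n)) * cis (2 * pi * (real_of_int (a * b) / real n))"
  unfolding qft_entry_def cis_conv_exp by (simp add: mult_ac)

lemma bij_betw_restrict_const_outside:
  "bij_betw (\<lambda>x. restrict x I) {x. (\<forall>a\<in>I. x a \<in> B a) \<and> (\<forall>a. a \<notin> I \<longrightarrow> x a = z)} (PiE I B)"
  by (rule bij_betw_byWitness[where f' = "\<lambda>v a. if a \<in> I then v a else z"])
     (auto simp: PiE_iff extensional_def fun_eq_iff)

lemma card_filter_eq_sum: "finite A \<Longrightarrow> card {a \<in> A. Q a} = (\<Sum>a\<in>A. if Q a then 1 else 0)"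
  by (simp add: sum.inter_filter[symmetric])

lemma plen_eq:
  assumes "1 < q" and "card X = q ^ n"
  shows "plen q X = n"
  unfolding plen_def using assms by (intro the_equality) auto

lemma power_ratio_le_inverse:
  fixes q d h :: nat and x :: real
  assumes q: "q \<ge> 2" and x: "x > 1" and h: "real h \<ge> real d + of_int \<lceil>log 2 x\<rceil>"
  shows "real q ^ d / real q ^ h \<le> 1 / x"
proof -
  have ceil: "log 2 x \<le> of_int \<lceil>log 2 x\<rceil>" by simp
  moreover have "log 2 x > 0" using x by simp
  ultimately have "d \<le> h" using h by linarith
  then have t: "log 2 x \<le> real (h - d)" using h ceil by (simp add: of_nat_diff) linarith
  have "x = 2 powr (log 2 x)" using x by simp
  also have "\<dots> \<le> 2 powr real (h - d)" using t by (intro powr_mono) auto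
  also have "\<dots> = 2 ^ (h - d)" by (simp add: powr_realpow)
  also have "\<dots> \<le> real q ^ (h - d)" using q by (intro power_mono) auto
  finally have x_le: "x \<le> real q ^ (h - d)" .
  have "real q ^ d / real q ^ h = 1 / real q ^ (h - d)"
    using \<open>d \<le> h\<close> q by (simp add: power_diff)
  also have "\<dots> \<le> 1 / x" using x_le x q by (intro divide_left_mono) (auto intro!: mult_pos_pos)
  finally show ?thesis .
qed

lemma Gfull_memD:
  assumes "x \<in> Gfull p r \<alpha> m"
  shows "k < m \<Longrightarrow> j < r k \<Longrightarrow> 0 \<le> x k j \<and> x k j < int (p k ^ \<alpha> k j)"
    and "\<not> (k < m \<and> j < r k) \<Longrightarrow> x k j = 0"
proof -
  have "if k < m \<and> j < r k then 0 \<le> x k j \<and> x k j < int (p k ^ \<alpha> k j) else x k j = 0"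
    using assms unfolding Gfull_def by blast
  then show "k < m \<Longrightarrow> j < r k \<Longrightarrow> 0 \<le> x k j \<and> x k j < int (p k ^ \<alpha> k j)"
    and "\<not> (k < m \<and> j < r k) \<Longrightarrow> x k j = 0" by simp_all
qed

lemma finite_Gfull: "finite (Gfull p r \<alpha> m)"
proof -
  define I where "I = (SIGMA k:{..<m}. {..<r k})"
  define B where "B = (\<lambda>(k, j). {0..<int (p k ^ \<alpha> k j)})"
  let ?X = "{x. (\<forall>a\<in>I. x a \<in> B a) \<and> (\<forall>a. a \<notin> I \<longrightarrow> x a = 0)}"
  have "finite (PiE I B)" by (rule finite_PiE) (auto simp: I_def B_def)
  then have "finite ?X" by (subst bij_betw_finite[OF bij_betw_restrict_const_outside])
  moreover have "case_prod ` Gfull p r \<alpha> m \<subseteq> ?X"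
    using Gfull_memD by (fastforce simp: I_def B_def)
  ultimately have "finite (case_prod ` Gfull p r \<alpha> m)" by (rule finite_subset[rotated])
  moreover have "inj_on case_prod (Gfull p r \<alpha> m)"
    by (intro inj_onI) (metis curry_case_prod)
  ultimately show ?thesis by (rule finite_imageD)
qed

lemma g_diff_eq_0_iff:
  assumes b: "b \<in> Gfull p r \<alpha> m" and d: "d \<in> Gfull p r \<alpha> m"
  shows "g_diff p \<alpha> b d = (\<lambda>_ _. 0) \<longleftrightarrow> b = d"
proof
  assume "b = d"
  then show "g_diff p \<alpha> b d = (\<lambda>_ _. 0)"
    unfolding g_diff_def g_add_def g_neg_def by (intro ext) (simp add: mod_add_right_eq)
next
  assume e: "g_diff p \<alpha> b d = (\<lambda>_ _. 0)"
  show "b = d"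
  proof (intro ext)
    fix k j
    have "(b k j - d k j) mod int (p k ^ \<alpha> k j) = 0"
      using fun_cong[OF fun_cong[OF e, of k], of j]
      unfolding g_diff_def g_add_def g_neg_def by (simp add: mod_add_right_eq)
    then have "b k j mod int (p k ^ \<alpha> k j) = d k j mod int (p k ^ \<alpha> k j)"
      by (simp add: mod_eq_dvd_iff mod_eq_0_iff_dvd)
    then show "b k j = d k j"
      using Gfull_memD[OF b, of k j] Gfull_memD[OF d, of k j]
      by (cases "k < m \<and> j < r k") (simp_all add: mod_pos_pos_trivial)
  qed
qed

lemma embed_gi_add: "embed i (gi_add p \<alpha> i x y) = g_add p \<alpha> (embed i x) (embed i y)"
  unfolding embed_def gi_add_def g_add_def by (intro ext) auto

lemma embed_gi_neg: "embed i (gi_neg p \<alpha> i x) = g_neg p \<alpha> (embed i x)"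
  unfolding embed_def gi_neg_def g_neg_def by (intro ext) auto

lemma embed_zero: "embed i (\<lambda>_. 0) = (\<lambda>_ _. 0)"
  unfolding embed_def by (intro ext) auto

lemma embed_in_Gfull:
  assumes "x \<in> Gi p r \<alpha> i" and "i < m" and "\<forall>k<m. p k > 0"
  shows "embed i x \<in> Gfull p r \<alpha> m"
  using assms unfolding Gfull_def Gi_def embed_def by auto

section \<open>Characters and annihilators in a node group\<close>

locale prime_node =
  fixes p r :: "nat \<Rightarrow> nat" and \<alpha> :: "nat \<Rightarrow> nat \<Rightarrow> nat" and i :: nat
  assumes prime_P: "prime (p i)" and alpha_pos: "\<forall>j<r i. 1 \<le> \<alpha> i j"
begin

abbreviation "P \<equiv> p i"
abbreviation "R \<equiv> r i"
abbreviation "N j \<equiv> int (p i ^ \<alpha> i j)"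
abbreviation "G \<equiv> Gi p r \<alpha> i"
abbreviation "add \<equiv> gi_add p \<alpha> i"
abbreviation "neg \<equiv> gi_neg p \<alpha> i"
abbreviation "zero \<equiv> (\<lambda>_::nat. 0::int)"
abbreviation "subgrp H \<equiv> is_subgrp G add neg zero H"

definition pairing :: "(nat \<Rightarrow> int) \<Rightarrow> (nat \<Rightarrow> int) \<Rightarrow> real" where
  "pairing x y = (\<Sum>j<R. real_of_int (x j * y j) / real (P ^ \<alpha> i j))"

definition orth :: "(nat \<Rightarrow> int) \<Rightarrow> (nat \<Rightarrow> int) \<Rightarrow> bool" where
  "orth x y \<longleftrightarrow> pairing x y \<in> \<int>"

definition character :: "(nat \<Rightarrow> int) \<Rightarrow> (nat \<Rightarrow> int) \<Rightarrow> complex" where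
  "character x y = cis (2 * pi * pairing x y)"

definition annihilator :: "(nat \<Rightarrow> int) set \<Rightarrow> (nat \<Rightarrow> int) set" where
  "annihilator X = {y \<in> G. \<forall>x\<in>X. orth x y}"

definition scale :: "nat \<Rightarrow> (nat \<Rightarrow> int) \<Rightarrow> (nat \<Rightarrow> int)" where
  "scale c x = (\<lambda>j. (int c * x j) mod N j)"

lemma P_gt_1: "P > 1"
  using prime_P prime_gt_1_nat by blast

lemma N_pos: "N j > 0"
  using P_gt_1 by simp

lemma mem_G_iff: "x \<in> G \<longleftrightarrow> (\<forall>j<R. 0 \<le> x j \<and> x j < N j) \<and> (\<forall>j\<ge>R. x j = 0)"
  unfolding Gi_def by simp

lemma ip_eq_0_iff_orth: "ip p r \<alpha> i x y = 0 \<longleftrightarrow> orth x y"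
  unfolding ip_def orth_def pairing_def frac_eq_0_iff by simp

lemma pairing_commute: "pairing x y = pairing y x"
  unfolding pairing_def by (simp add: mult.commute)

lemma orth_commute: "orth x y \<longleftrightarrow> orth y x"
  unfolding orth_def using pairing_commute by simp

lemma character_commute: "character x y = character y x"
  unfolding character_def using pairing_commute by simp

lemma character_eq_1_iff: "character x y = 1 \<longleftrightarrow> orth x y"
  unfolding character_def orth_def by (rule cis_2pi_eq_1_iff)

lemma pairing_add_right: "pairing x (\<lambda>j. u j + v j) = pairing x u + pairing x v"
  unfolding pairing_def by (simp add: distrib_left add_divide_distrib sum.distrib)

lemma pairing_uminus_right: "pairing x (\<lambda>j. - u j) = - pairing x u"
  unfolding pairing_def by (simp add: sum_negf)

lemma pairing_of_nat_mult_right: "pairing x (\<lambda>j. int c * u j) = real c * pairing x u"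
  unfolding pairing_def sum_distrib_left by (rule sum.cong) (auto simp: field_simps)

lemma pairing_zero_left [simp]: "pairing zero x = 0"
  unfolding pairing_def by simp

lemma pairing_zero_right [simp]: "pairing x zero = 0"
  unfolding pairing_def by simp

lemma pairing_mod_right:
  "pairing x (\<lambda>j. u j mod N j) = pairing x u - of_int (\<Sum>j<R. x j * (u j div N j))"
proof -
  have "real_of_int (x j * (u j mod N j)) / real (P ^ \<alpha> i j)
      = real_of_int (x j * u j) / real (P ^ \<alpha> i j) - of_int (x j * (u j div N j))" for j
  proof -
    have "x j * u j = x j * (u j mod N j) + x j * (u j div N j) * N j"
      by (metis distrib_left div_mult_mod_eq mult.assoc add.commute)
    then have "real_of_int (x j * u j)
        = real_of_int (x j * (u j mod N j)) + real_of_int (x j * (u j div N j)) * real (P ^ \<alpha> i j)"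
      by (metis of_int_add of_int_mult of_int_of_nat_eq)
    then show ?thesis using N_pos[of j] by (simp add: field_simps)
  qed
  then have "pairing x (\<lambda>j. u j mod N j)
      = (\<Sum>j<R. real_of_int (x j * u j) / real (P ^ \<alpha> i j) - of_int (x j * (u j div N j)))"
    unfolding pairing_def by (rule sum.cong[OF refl])
  then show ?thesis unfolding pairing_def sum_subtractf of_int_sum .
qed

lemma character_mod_right: "character x (\<lambda>j. u j mod N j) = character x u"
proof -
  have "- real_of_int (\<Sum>j<R. x j * (u j div N j)) \<in> \<int>" by (intro Ints_minus Ints_of_int)
  from cis_2pi_add_Ints[OF this, of "pairing x u"] show ?thesis
    unfolding character_def pairing_mod_right by (simp only: diff_conv_add_uminus)
qed

lemma character_add: "character x (add y z) = character x y * character x z"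
proof -
  have "character x (add y z) = character x (\<lambda>j. y j + z j)"
    unfolding gi_add_def by (rule character_mod_right)
  then show ?thesis unfolding character_def pairing_add_right by (simp add: cis_mult distrib_left)
qed

lemma character_neg: "character x (neg y) = cnj (character x y)"
proof -
  have "character x (neg y) = character x (\<lambda>j. - y j)"
    unfolding gi_neg_def by (rule character_mod_right)
  then show ?thesis unfolding character_def pairing_uminus_right by (simp add: cis_cnj)
qed

lemma character_zero_right [simp]: "character x zero = 1"
  unfolding character_def by simp

lemma cnj_character_mult: "cnj (character x y) * character x y = 1"
  unfolding character_def by (simp add: cis_cnj cis_mult)

lemma orth_add: "orth x y \<Longrightarrow> orth x z \<Longrightarrow> orth x (add y z)"
  by (simp add: character_eq_1_iff[symmetric] character_add)

lemma orth_neg: "orth x y \<Longrightarrow> orth x (neg y)"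
  by (simp add: character_eq_1_iff[symmetric] character_neg)

lemma orth_zero_left: "orth zero x"
  unfolding orth_def by simp

lemma orth_zero_right: "orth x zero"
  unfolding orth_def by simp

lemma zero_in_G: "zero \<in> G"
  unfolding mem_G_iff using N_pos by simp

lemma add_in_G: "x \<in> G \<Longrightarrow> y \<in> G \<Longrightarrow> add x y \<in> G"
  unfolding mem_G_iff gi_add_def using N_pos by simp

lemma neg_in_G: "x \<in> G \<Longrightarrow> neg x \<in> G"
  unfolding mem_G_iff gi_neg_def using N_pos by simp

lemma mod_N_eq:
  assumes "x \<in> G"
  shows "(\<lambda>j. x j mod N j) = x"
proof
  fix j
  show "x j mod N j = x j"
    using assms unfolding mem_G_iff by (cases "j < R") simp_all
qed

lemma add_zero: "x \<in> G \<Longrightarrow> add x zero = x"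
  unfolding gi_add_def using mod_N_eq by simp

lemma zero_add: "x \<in> G \<Longrightarrow> add zero x = x"
  unfolding gi_add_def using mod_N_eq by simp

lemma add_commute: "add x y = add y x"
  unfolding gi_add_def by (simp add: add.commute)

lemma add_assoc: "add (add x y) z = add x (add y z)"
  unfolding gi_add_def by (simp add: mod_add_left_eq mod_add_right_eq add.assoc)

lemma add_neg: "add x (neg x) = zero"
  unfolding gi_add_def gi_neg_def by (simp add: mod_add_right_eq)

lemma add_neg_cancel_left: "y \<in> G \<Longrightarrow> add x (add (neg x) y) = y"
  unfolding add_assoc[symmetric] add_neg by (rule zero_add)

lemma neg_add: "add (neg x) x = zero"
  by (subst add_commute) (rule add_neg)

lemma neg_add_cancel_left: "y \<in> G \<Longrightarrow> add (neg x) (add x y) = y"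
  unfolding add_assoc[symmetric] neg_add by (rule zero_add)

lemma add_neg_cancel_right: "x \<in> G \<Longrightarrow> add (add x (neg y)) y = x"
  unfolding add_assoc neg_add by (rule add_zero)

lemma add_left_cancel: "y \<in> G \<Longrightarrow> z \<in> G \<Longrightarrow> add x y = add x z \<Longrightarrow> y = z"
  by (metis neg_add_cancel_left)

lemma subgrpD:
  assumes "subgrp H"
  shows "H \<subseteq> G" "zero \<in> H" "x \<in> H \<Longrightarrow> y \<in> H \<Longrightarrow> add x y \<in> H" "x \<in> H \<Longrightarrow> neg x \<in> H"
  using assms unfolding is_subgrp_def by auto

lemma subgrp_G: "subgrp G"
  unfolding is_subgrp_def using zero_in_G add_in_G neg_in_G by auto

lemma subgrp_annihilator: "subgrp (annihilator X)"
  unfolding is_subgrp_def annihilator_def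
  using zero_in_G add_in_G neg_in_G orth_zero_right orth_add orth_neg by auto

lemma inj_on_add: "H \<subseteq> G \<Longrightarrow> inj_on (add x) H"
  using add_left_cancel by (meson inj_onI subsetD)

lemma bij_betw_add:
  assumes H: "subgrp H" and x: "x \<in> H"
  shows "bij_betw (add x) H H"
proof (rule bij_betw_imageI)
  show "inj_on (add x) H" using inj_on_add subgrpD(1)[OF H] .
  have "y = add x (add (neg x) y)" "add (neg x) y \<in> H" if "y \<in> H" for y
    using add_neg_cancel_left subgrpD[OF H] x that by auto
  then show "add x ` H = H" using subgrpD(3)[OF H] x by blast
qed

lemma scale_0: "scale 0 x = zero"
  unfolding scale_def by simp

lemma scale_1: "x \<in> G \<Longrightarrow> scale 1 x = x"
  unfolding scale_def using mod_N_eq by simp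

lemma scale_Suc: "scale (Suc c) x = add x (scale c x)"
  unfolding scale_def gi_add_def by (simp add: mod_add_right_eq algebra_simps)

lemma scale_add: "scale c (add x y) = add (scale c x) (scale c y)"
  unfolding scale_def gi_add_def
  by (rule ext) (simp only: mod_mult_right_eq mod_add_eq distrib_left)

lemma scale_neg: "scale c (neg x) = neg (scale c x)"
  unfolding scale_def gi_neg_def
  by (rule ext) (simp only: mod_mult_right_eq mod_minus_eq mult_minus_right)

lemma scale_scale: "scale a (scale b x) = scale (a * b) x"
  unfolding scale_def by (simp add: mod_mult_right_eq mult.assoc)

lemma scale_in_subgrp: "subgrp H \<Longrightarrow> x \<in> H \<Longrightarrow> scale c x \<in> H"
  by (induction c) (simp_all add: scale_0 scale_Suc subgrpD)

lemma scale_exponent_eq_zero: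
  assumes "x \<in> G"
  shows "scale (P ^ (\<Sum>j<R. \<alpha> i j)) x = zero"
proof
  fix j
  show "scale (P ^ (\<Sum>j<R. \<alpha> i j)) x j = zero j"
  proof (cases "j < R")
    case True
    then have "P ^ \<alpha> i j dvd P ^ (\<Sum>j<R. \<alpha> i j)"
      by (intro le_imp_power_dvd member_le_sum) auto
    then have "N j dvd int (P ^ (\<Sum>j<R. \<alpha> i j)) * x j"
      by (simp add: of_nat_dvd_iff[symmetric] del: of_nat_power)
    then show ?thesis unfolding scale_def by simp
  next
    case False
    then show ?thesis using assms unfolding mem_G_iff scale_def by simp
  qed
qed

lemma scale_pairing_Ints:
  assumes "scale c y = zero"
  shows "real c * pairing s y \<in> \<int>"
proof -
  have "character s (scale c y) = character s (\<lambda>j. int c * y j)"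
    unfolding scale_def by (rule character_mod_right)
  then have "cis (2 * pi * (real c * pairing s y)) = 1"
    using assms unfolding character_def pairing_of_nat_mult_right by simp
  then show ?thesis using cis_2pi_eq_1_iff by simp
qed

lemma card_G: "card G = P ^ (\<Sum>j<R. \<alpha> i j)" and finite_G: "finite G"
proof -
  have G_eq: "G = {x. (\<forall>j\<in>{..<R}. x j \<in> {0..<N j}) \<and> (\<forall>j. j \<notin> {..<R} \<longrightarrow> x j = 0)}"
    by (auto simp: Gi_def)
  have bij: "bij_betw (\<lambda>x. restrict x {..<R}) G (PiE {..<R} (\<lambda>j. {0..<N j}))"
    unfolding G_eq by (rule bij_betw_restrict_const_outside)
  have "card (PiE {..<R} (\<lambda>j. {0..<N j})) = (\<Prod>j<R. P ^ \<alpha> i j)"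
    by (simp add: card_PiE nat_power_eq del: of_nat_power)
  then show "card G = P ^ (\<Sum>j<R. \<alpha> i j)"
    using bij_betw_same_card[OF bij] by (simp add: power_sum)
  show "finite G" using bij_betw_finite[OF bij] by (simp add: finite_PiE)
qed

lemma card_G_pos: "card G > 0"
  using finite_G zero_in_G card_gt_0_iff by blast

lemma finite_subgrp: "subgrp H \<Longrightarrow> finite H"
  using subgrpD(1) finite_G finite_subset by blast

lemma orth_all_imp_zero:
  assumes y: "y \<in> G" and orth: "\<forall>x\<in>G. orth y x"
  shows "y = zero"
proof
  fix j
  show "y j = zero j"
  proof (cases "j < R")
    case False
    then show ?thesis using y unfolding mem_G_iff by simp
  next
    case True
    show ?thesis
    proof (rule ccontr)
      assume "y j \<noteq> zero j"
      then have y_j: "0 < y j" "y j < N j" using y True unfolding mem_G_iff by auto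
      let ?e = "\<lambda>k. if k = j then 1 else 0 :: int"
      have "1 < P ^ \<alpha> i j" using alpha_pos True P_gt_1 by (intro one_less_power) auto
      then have "1 < N j" by (metis of_nat_1 of_nat_less_iff)
      then have "?e \<in> G" using True N_pos unfolding mem_G_iff by auto
      then have "pairing y ?e \<in> \<int>" using orth unfolding orth_def by blast
      moreover have "pairing y ?e = (\<Sum>k<R. if k = j then real_of_int (y j) / real (P ^ \<alpha> i j) else 0)"
        unfolding pairing_def by (rule sum.cong) auto
      then have "pairing y ?e = real_of_int (y j) / real (P ^ \<alpha> i j)" using True by simp
      then have "0 < pairing y ?e" "pairing y ?e < 1"
        using y_j N_pos[of j] by (simp_all add: divide_less_eq of_nat_less_iff[symmetric] del: of_nat_power)
      ultimately show False by (auto elim!: Ints_cases)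
    qed
  qed
qed

lemma sum_character_subgrp:
  assumes H: "subgrp H"
  shows "(\<Sum>x\<in>H. character y x) = (if \<forall>x\<in>H. orth y x then of_nat (card H) else 0)"
proof (cases "\<forall>x\<in>H. orth y x")
  case True
  then have "(\<Sum>x\<in>H. character y x) = (\<Sum>x\<in>H. 1)" using character_eq_1_iff by (intro sum.cong) auto
  then show ?thesis using True by simp
next
  case False
  then obtain x0 where x0: "x0 \<in> H" "character y x0 \<noteq> 1" using character_eq_1_iff by blast
  have "(\<Sum>x\<in>H. character y x) = (\<Sum>x\<in>H. character y (add x0 x))"
    using sum.reindex_bij_betw[OF bij_betw_add[OF H x0(1)], of "character y"] by simp
  also have "\<dots> = character y x0 * (\<Sum>x\<in>H. character y x)"
    by (simp add: character_add sum_distrib_left)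
  finally have "(1 - character y x0) * (\<Sum>x\<in>H. character y x) = 0" by (simp add: algebra_simps)
  then show ?thesis using x0 False by auto
qed

lemma card_subgrp_mult_card_annihilator:
  assumes H: "subgrp H"
  shows "card H * card (annihilator H) = card G"
proof -
  have "(\<Sum>y\<in>G. \<Sum>x\<in>H. character y x) = (\<Sum>y\<in>G. if y \<in> annihilator H then of_nat (card H) else 0)"
    using sum_character_subgrp[OF H] unfolding annihilator_def
    by (intro sum.cong) (auto simp: orth_commute)
  also have "\<dots> = of_nat (card H * card (annihilator H))"
    using finite_G by (simp add: sum.If_cases annihilator_def Int_def conj_commute)
  finally have lhs: "(\<Sum>y\<in>G. \<Sum>x\<in>H. character y x) = of_nat (card H * card (annihilator H))" .
  have "(\<Sum>y\<in>G. \<Sum>x\<in>H. character y x) = (\<Sum>x\<in>H. \<Sum>y\<in>G. character x y)"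
    by (subst sum.swap) (simp add: character_commute)
  also have "\<dots> = (\<Sum>x\<in>H. if x = zero then of_nat (card G) else 0)"
    using sum_character_subgrp[OF subgrp_G] orth_all_imp_zero orth_zero_left subgrpD(1)[OF H]
    by (intro sum.cong) auto
  also have "\<dots> = of_nat (card G)"
    using subgrpD(2)[OF H] finite_subgrp[OF H] by simp
  finally have "of_nat (card H * card (annihilator H)) = (of_nat (card G) :: complex)" using lhs by simp
  then show ?thesis using of_nat_eq_iff by blast
qed

lemma card_subgrp_prime_power:
  assumes "subgrp H"
  obtains e where "card H = P ^ e"
proof -
  have "card H dvd P ^ (\<Sum>j<R. \<alpha> i j)"
    using card_subgrp_mult_card_annihilator[OF assms] card_G by (metis dvd_triv_left)
  then show ?thesis using divides_primepow_nat[OF prime_P] that by blast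
qed

lemma Gi_span_G: "Gi_span p r \<alpha> i G = G"
  unfolding Gi_span_def using subgrp_G by blast

lemma Gi_span_subset_subgrp: "subgrp H \<Longrightarrow> S \<subseteq> H \<Longrightarrow> Gi_span p r \<alpha> i S \<subseteq> H"
  unfolding Gi_span_def by blast

lemma minimal_generating_set:
  obtains S where "finite S" "card S = Gi_rank p r \<alpha> i G" "S \<subseteq> G" "Gi_span p r \<alpha> i S = G"
proof -
  have "\<exists>n S. finite S \<and> card S = n \<and> S \<subseteq> G \<and> Gi_span p r \<alpha> i S = G"
    using finite_G Gi_span_G by blast
  then have "\<exists>S. finite S \<and> card S = Gi_rank p r \<alpha> i G \<and> S \<subseteq> G \<and> Gi_span p r \<alpha> i S = G"
    unfolding Gi_rank_def by (rule LeastI_ex)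
  then show ?thesis using that by blast
qed

lemma eq_if_character_eq_on_generators:
  assumes "S \<subseteq> G" and "Gi_span p r \<alpha> i S = G" and "y \<in> G" and "y' \<in> G"
    and "\<forall>s\<in>S. character s y = character s y'"
  shows "y = y'"
proof -
  define z where "z = add y (neg y')"
  have z: "z \<in> G" unfolding z_def using assms(3,4) add_in_G neg_in_G by simp
  have "orth s z" if "s \<in> S" for s
  proof -
    have "character s z = cnj (character s y') * character s y'"
      unfolding z_def character_add character_neg using assms(5) that by (simp add: mult.commute)
    then show ?thesis using cnj_character_mult character_eq_1_iff by simp
  qed
  then have "S \<subseteq> annihilator {z}"
    using assms(1) orth_commute unfolding annihilator_def by auto
  then have "G \<subseteq> annihilator {z}"
    using Gi_span_subset_subgrp[OF subgrp_annihilator] assms(2) by metis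
  then have "z = zero"
    using orth_all_imp_zero[OF z] orth_commute unfolding annihilator_def by blast
  then show "y = y'"
    using add_neg_cancel_right[OF assms(3), of y'] zero_add[OF assms(4)] unfolding z_def by simp
qed

definition qft_norm :: real where
  "qft_norm = (\<Prod>j<R. 1 / sqrt (real (P ^ \<alpha> i j)))"

lemma qftGi_entry_eq: "qftGi_entry p r \<alpha> i x y = of_real qft_norm * character x y"
proof -
  have "qftGi_entry p r \<alpha> i x y = (\<Prod>j<R. of_real (1 / sqrt (real (P ^ \<alpha> i j)))
      * cis (2 * pi * (real_of_int (x j * y j) / real (P ^ \<alpha> i j))))"
    unfolding qftGi_entry_def qft_entry_eq_cis ..
  also have "\<dots> = of_real qft_norm * cis (\<Sum>j<R. 2 * pi * (real_of_int (x j * y j) / real (P ^ \<alpha> i j)))"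
    unfolding prod.distrib prod_cis[OF finite_lessThan] qft_norm_def of_real_prod ..
  also have "\<dots> = of_real qft_norm * character x y"
    unfolding character_def pairing_def sum_distrib_left ..
  finally show ?thesis .
qed

lemma qft_norm_sq: "qft_norm ^ 2 = 1 / real (card G)"
proof -
  have "qft_norm ^ 2 = (\<Prod>j<R. (1 / sqrt (real (P ^ \<alpha> i j))) ^ 2)"
    unfolding qft_norm_def by (rule prod_power_distrib)
  also have "\<dots> = 1 / real (\<Prod>j<R. P ^ \<alpha> i j)"
    by (simp add: power_divide prod_dividef del: of_nat_power)
  also have "(\<Prod>j<R. P ^ \<alpha> i j) = card G"
    unfolding card_G by (simp add: power_sum)
  finally show ?thesis .
qed

lemma qft_I_init_state:
  "qft_I p r \<alpha> i init_state (x, b) = (if b = (\<lambda>_ _. 0) then of_real qft_norm else 0)"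
proof -
  have "qft_I p r \<alpha> i init_state (x, b)
      = (\<Sum>x'\<in>G. if x' = zero then (if b = (\<lambda>_ _. 0) then qftGi_entry p r \<alpha> i x' x else 0) else 0)"
    unfolding qft_I_def init_state_def by simp (intro sum.cong; auto)
  also have "\<dots> = (if b = (\<lambda>_ _. 0) then qftGi_entry p r \<alpha> i zero x else 0)"
    using zero_in_G finite_G by (simp add: sum.delta)
  finally show ?thesis
    unfolding qftGi_entry_eq using character_commute[of zero x] by simp
qed

lemma subgrp_K_node:
  assumes "is_subgrp (Gfull p r \<alpha> m) (g_add p \<alpha>) (g_neg p \<alpha>) (\<lambda>_ _. 0) K"
  shows "subgrp (K_node p r \<alpha> K i)"
  using assms zero_in_G add_in_G neg_in_G
  unfolding is_subgrp_def K_node_def by (auto simp: embed_zero embed_gi_add embed_gi_neg)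

lemma f_node_eq_iff_K_node:
  assumes hides: "\<forall>x\<in>Gfull p r \<alpha> m. \<forall>y\<in>Gfull p r \<alpha> m. f x = f y \<longleftrightarrow> g_diff p \<alpha> x y \<in> K"
    and "i < m" and "\<forall>k<m. p k > 0" and x: "x \<in> G" and x': "x' \<in> G"
  shows "f_node f i x' = f_node f i x \<longleftrightarrow> add x' (neg x) \<in> K_node p r \<alpha> K i"
proof -
  have "f_node f i x' = f_node f i x \<longleftrightarrow> g_diff p \<alpha> (embed i x') (embed i x) \<in> K"
    unfolding f_node_def using hides embed_in_Gfull x x' assms(2,3) by blast
  also have "g_diff p \<alpha> (embed i x') (embed i x) = embed i (add x' (neg x))"
    unfolding g_diff_def embed_gi_add embed_gi_neg ..
  finally show ?thesis
    unfolding K_node_def using add_in_G[OF x' neg_in_G[OF x]] by simp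
qed

end

section \<open>Sample sequences whose annihilator is too large\<close>

locale node_subgroup = prime_node +
  fixes Ki :: "(nat \<Rightarrow> int) set"
  assumes subgrp_Ki: "subgrp Ki"
begin

abbreviation "H \<equiv> annihilator Ki"

definition scale_preimage :: "(nat \<Rightarrow> int) set" where
  "scale_preimage = {x \<in> G. scale P x \<in> Ki}"

definition p_torsion :: "(nat \<Rightarrow> int) set" where
  "p_torsion = {y \<in> G. scale P y = zero}"

definition bad_lists :: "nat \<Rightarrow> (nat \<Rightarrow> int) list set" where
  "bad_lists h = {ms. length ms = h \<and> set ms \<subseteq> H \<and> annihilator (set ms) \<noteq> Ki}"

lemma Ki_subset_G: "Ki \<subseteq> G"
  using subgrpD(1)[OF subgrp_Ki] .

lemma finite_Ki: "finite Ki"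
  using finite_subgrp[OF subgrp_Ki] .

lemma card_Ki_pos: "card Ki > 0"
  using finite_Ki subgrpD(2)[OF subgrp_Ki] card_gt_0_iff by blast

lemma finite_H: "finite H"
  using finite_subgrp[OF subgrp_annihilator] .

lemma card_Ki_mult_card_H: "card Ki * card H = card G"
  using card_subgrp_mult_card_annihilator[OF subgrp_Ki] .

lemma card_H_pos: "card H > 0"
  using card_G_pos by (simp flip: card_Ki_mult_card_H)

lemma Ki_subset_annihilator: "X \<subseteq> H \<Longrightarrow> Ki \<subseteq> annihilator X"
  using Ki_subset_G orth_commute unfolding annihilator_def by blast

text \<open>
  \<open>{y \<in> H. orth x y}\<close> is the annihilator of \<open>insert x Ki\<close>, whose own annihilator strictly
  contains \<open>Ki\<close> and hence, being a \<open>p\<close>-group, is at least \<open>p\<close> times larger.\<close>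
lemma card_orth_mult_P_le:
  assumes x: "x \<in> G" "x \<notin> Ki"
  shows "card {y \<in> H. orth x y} * P \<le> card H"
proof -
  define L where "L = annihilator (insert x Ki)"
  have L_eq: "{y \<in> H. orth x y} = L" unfolding L_def annihilator_def by auto
  have "insert x Ki \<subseteq> annihilator L"
    unfolding L_def annihilator_def using x Ki_subset_G orth_commute by blast
  then have "Ki \<subset> annihilator L" using x by blast
  then have lt: "card Ki < card (annihilator L)"
    using finite_subgrp[OF subgrp_annihilator] psubset_card_mono by blast
  obtain a where a: "card (annihilator L) = P ^ a"
    using card_subgrp_prime_power[OF subgrp_annihilator] .
  obtain b where b: "card Ki = P ^ b"
    using card_subgrp_prime_power[OF subgrp_Ki] .
  have "b < a" using lt a b P_gt_1 power_less_imp_less_exp by auto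
  then have "P ^ Suc b \<le> P ^ a" using P_gt_1 by (intro power_increasing) auto
  then have "P * card Ki \<le> card (annihilator L)" using a b by simp
  then have "card L * P * card Ki \<le> card L * card (annihilator L)" by (simp add: mult.assoc)
  also have "\<dots> = card H * card Ki"
    using card_subgrp_mult_card_annihilator[OF subgrp_annihilator, of "insert x Ki"]
      card_Ki_mult_card_H unfolding L_def by (simp add: mult.commute)
  finally show ?thesis using L_eq card_Ki_pos by simp
qed

text \<open>Take the last multiple \<open>p\<^sup>t x\<^sub>0\<close> outside \<open>Ki\<close> of some \<open>x\<^sub>0 \<in> A - Ki\<close>.\<close>
lemma scale_preimage_in_larger_subgrp:
  assumes A: "subgrp A" and "Ki \<subset> A"
  obtains x where "x \<in> A" "x \<notin> Ki" "scale P x \<in> Ki"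
proof -
  obtain x0 where x0: "x0 \<in> A" "x0 \<notin> Ki" using assms(2) by blast
  have x0G: "x0 \<in> G" using x0 subgrpD(1)[OF A] by auto
  let ?Q = "\<lambda>t. scale (P ^ t) x0 \<in> Ki"
  have "?Q (\<Sum>j<R. \<alpha> i j)" using scale_exponent_eq_zero[OF x0G] subgrpD(2)[OF subgrp_Ki] by simp
  then have Q_Least: "?Q (LEAST t. ?Q t)" by (rule LeastI)
  have "(LEAST t. ?Q t) \<noteq> 0"
  proof
    assume "(LEAST t. ?Q t) = 0"
    then show False using Q_Least x0 scale_1[OF x0G] by simp
  qed
  then obtain t where "(LEAST t. ?Q t) = Suc t" using not0_implies_Suc by blast
  then have "?Q (Suc t)" "\<not> ?Q t" using Q_Least not_less_Least[of t ?Q] by auto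
  then show ?thesis
    using that[of "scale (P ^ t) x0"] scale_in_subgrp[OF A x0(1)]
    by (simp add: scale_scale mult.commute)
qed

lemma card_Ki_le_card_scale_preimage_in_larger_subgrp:
  assumes A: "subgrp A" and "Ki \<subset> A"
  shows "card Ki \<le> card (A \<inter> scale_preimage - Ki)"
proof -
  obtain x where x: "x \<in> A" "x \<notin> Ki" "scale P x \<in> Ki"
    using scale_preimage_in_larger_subgrp[OF assms] .
  have "add x ` Ki \<subseteq> A \<inter> scale_preimage - Ki"
  proof
    fix z assume "z \<in> add x ` Ki"
    then obtain k where k: "k \<in> Ki" "z = add x k" by blast
    have "z \<in> A" using k assms(2) subgrpD(3)[OF A x(1)] by auto
    moreover have "scale P z = add (scale P x) (scale P k)" using k scale_add by simp
    then have "scale P z \<in> Ki"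
      using x(3) scale_in_subgrp[OF subgrp_Ki k(1)] subgrpD(3)[OF subgrp_Ki] by simp
    moreover have "z \<notin> Ki"
    proof
      assume "z \<in> Ki"
      then have "add z (neg k) \<in> Ki" using subgrpD(3,4)[OF subgrp_Ki] k by auto
      moreover have "add z (neg k) = x"
        using k x(1) subgrpD(1)[OF A] by (auto simp: add_assoc add_neg add_zero)
      ultimately show False using x(2) by simp
    qed
    ultimately show "z \<in> A \<inter> scale_preimage - Ki"
      using subgrpD(1)[OF A] unfolding scale_preimage_def by auto
  qed
  moreover have "finite (A \<inter> scale_preimage - Ki)"
    using finite_subgrp[OF A] by simp
  ultimately have "card (add x ` Ki) \<le> card (A \<inter> scale_preimage - Ki)"
    by (rule card_mono[rotated])
  then show ?thesis using card_image[OF inj_on_add[OF Ki_subset_G]] by simp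
qed

lemma card_Ki_le_orth_witnesses:
  assumes "ms \<in> bad_lists h"
  shows "card Ki \<le> card {x \<in> scale_preimage - Ki. \<forall>y\<in>set ms. orth y x}"
proof -
  have "Ki \<subset> annihilator (set ms)"
    using assms Ki_subset_annihilator unfolding bad_lists_def by auto
  moreover have "{x \<in> scale_preimage - Ki. \<forall>y\<in>set ms. orth y x} = annihilator (set ms) \<inter> scale_preimage - Ki"
    unfolding annihilator_def scale_preimage_def by auto
  ultimately show ?thesis
    using card_Ki_le_card_scale_preimage_in_larger_subgrp[OF subgrp_annihilator] by simp
qed

lemma finite_bad_lists: "finite (bad_lists h)"
  by (rule finite_subset[OF _ finite_lists_length_eq[OF finite_H, of h]]) (auto simp: bad_lists_def)

lemma card_bad_lists_mult_card_Ki_le: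
  "card (bad_lists h) * card Ki \<le> (\<Sum>x\<in>scale_preimage - Ki. card {y \<in> H. orth x y} ^ h)"
proof -
  define X where "X = scale_preimage - Ki"
  have finX: "finite X" by (rule finite_subset[OF _ finite_G]) (auto simp: X_def scale_preimage_def)
  have "card (bad_lists h) * card Ki \<le> (\<Sum>ms\<in>bad_lists h. card {x \<in> X. \<forall>y\<in>set ms. orth y x})"
    using sum_mono[OF card_Ki_le_orth_witnesses] unfolding X_def by simp
  also have "\<dots> = (\<Sum>ms\<in>bad_lists h. \<Sum>x\<in>X. if \<forall>y\<in>set ms. orth y x then 1 else 0)"
    using card_filter_eq_sum[OF finX] by simp
  also have "\<dots> = (\<Sum>x\<in>X. \<Sum>ms\<in>bad_lists h. if \<forall>y\<in>set ms. orth y x then 1 else 0)"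
    by (rule sum.swap)
  also have "\<dots> = (\<Sum>x\<in>X. card {ms \<in> bad_lists h. \<forall>y\<in>set ms. orth y x})"
    using card_filter_eq_sum[OF finite_bad_lists] by simp
  also have "\<dots> \<le> (\<Sum>x\<in>X. card {ms. set ms \<subseteq> {y \<in> H. orth x y} \<and> length ms = h})"
  proof (rule sum_mono)
    fix x
    show "card {ms \<in> bad_lists h. \<forall>y\<in>set ms. orth y x}
        \<le> card {ms. set ms \<subseteq> {y \<in> H. orth x y} \<and> length ms = h}"
      using finite_H
      by (intro card_mono finite_lists_length_eq) (auto simp: bad_lists_def orth_commute)
  qed
  also have "\<dots> = (\<Sum>x\<in>X. card {y \<in> H. orth x y} ^ h)"
    using finite_H by (simp add: card_lists_length_eq)
  finally show ?thesis unfolding X_def .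
qed

lemma card_bad_lists_le:
  "card (bad_lists h) * card Ki * P ^ h \<le> card scale_preimage * card H ^ h"
proof -
  have "card (bad_lists h) * card Ki * P ^ h
      \<le> (\<Sum>x\<in>scale_preimage - Ki. (card {y \<in> H. orth x y} * P) ^ h)"
    using mult_right_mono[OF card_bad_lists_mult_card_Ki_le, of "P ^ h"]
    by (simp add: sum_distrib_right power_mult_distrib)
  also have "\<dots> \<le> (\<Sum>x\<in>scale_preimage - Ki. card H ^ h)"
    using card_orth_mult_P_le by (intro sum_mono power_mono) (auto simp: scale_preimage_def)
  also have "\<dots> \<le> card scale_preimage * card H ^ h"
    using finite_G by (auto intro!: card_mono finite_subset[of _ G] simp: scale_preimage_def)
  finally show ?thesis .
qed

lemma bad_lists_fraction_le:
  "real (card (bad_lists h)) / real (card H) ^ h \<le> real (card scale_preimage) / (real (card Ki) * real P ^ h)"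
proof -
  have "real (card (bad_lists h)) * (real (card Ki) * real P ^ h) \<le> real (card scale_preimage) * real (card H) ^ h"
    using card_bad_lists_le[of h] by (simp add: mult_ac flip: of_nat_mult of_nat_power)
  moreover have "real (card H) ^ h > 0" "real (card Ki) * real P ^ h > 0"
    using card_H_pos card_Ki_pos P_gt_1 by simp_all
  ultimately show ?thesis by (simp add: divide_le_eq le_divide_eq field_simps)
qed

lemma card_scale_preimage_le_card_G: "card scale_preimage \<le> card G"
  by (rule card_mono[OF finite_G]) (auto simp: scale_preimage_def)

lemma card_scale_preimage_le: "card scale_preimage \<le> card p_torsion * card Ki"
proof -
  define F where "F k = {x \<in> G. scale P x = k}" for k
  have "card (F k) \<le> card p_torsion" if k: "k \<in> Ki" for k
  proof (cases "F k = {}")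
    case False
    then obtain x0 where x0: "x0 \<in> G" "scale P x0 = k" unfolding F_def by blast
    have "inj_on (\<lambda>x. add x (neg x0)) (F k)"
      by (intro inj_onI) (metis (no_types, lifting) F_def add_neg_cancel_right mem_Collect_eq)
    moreover have "(\<lambda>x. add x (neg x0)) ` F k \<subseteq> p_torsion"
      using x0 unfolding F_def p_torsion_def
      by (auto simp: scale_add scale_neg add_neg add_in_G neg_in_G)
    moreover have "finite p_torsion"
      by (rule finite_subset[OF _ finite_G]) (auto simp: p_torsion_def)
    ultimately show ?thesis by (metis card_image card_mono)
  qed simp
  then have "card (\<Union>k\<in>Ki. F k) \<le> card p_torsion * card Ki"
    using card_UN_le[OF finite_Ki, of F] sum_mono[of Ki "\<lambda>k. card (F k)" "\<lambda>_. card p_torsion"]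
    by (simp add: mult.commute)
  moreover have "scale_preimage = (\<Union>k\<in>Ki. F k)"
    unfolding scale_preimage_def F_def by auto
  ultimately show ?thesis by simp
qed

text \<open>
  Pairing with a generating set \<open>S\<close> embeds the \<open>p\<close>-torsion into \<open>(p\<^sup>-\<^sup>1\<int>/\<int>)\<^sup>S\<close>, encoded here
  by the residues \<open>p \<langle>s, y\<rangle> mod p\<close>.\<close>
lemma card_p_torsion_le:
  assumes "finite S" and "S \<subseteq> G" and span: "Gi_span p r \<alpha> i S = G"
  shows "card p_torsion \<le> P ^ card S"
proof -
  define \<phi> where "\<phi> y = restrict (\<lambda>s. \<lfloor>real P * pairing s y\<rfloor> mod int P) S" for y
  have Ints: "real P * pairing s y = of_int \<lfloor>real P * pairing s y\<rfloor>" if "y \<in> p_torsion" for s y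
    using scale_pairing_Ints[of P y s] that unfolding p_torsion_def by simp
  have "inj_on \<phi> p_torsion"
  proof
    fix y y' assume y: "y \<in> p_torsion" and y': "y' \<in> p_torsion" and e: "\<phi> y = \<phi> y'"
    have "character s y = character s y'" if s: "s \<in> S" for s
    proof -
      let ?d = "\<lfloor>real P * pairing s y\<rfloor> - \<lfloor>real P * pairing s y'\<rfloor>"
      have "int P dvd ?d" using fun_cong[OF e, of s] s unfolding \<phi>_def by (simp add: mod_eq_dvd_iff)
      then obtain k where "?d = int P * k" by (elim dvdE)
      then have "real P * pairing s y = real P * (pairing s y' + of_int k)"
        using Ints[OF y, of s] Ints[OF y', of s] by (simp add: algebra_simps flip: of_int_diff)
      then have "pairing s y = pairing s y' + of_int k" using P_gt_1 by simp
      then show ?thesis unfolding character_def using cis_2pi_add_Ints by simp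
    qed
    then show "y = y'"
      using eq_if_character_eq_on_generators[OF assms(2) span] y y' unfolding p_torsion_def by blast
  qed
  moreover have "\<phi> ` p_torsion \<subseteq> PiE S (\<lambda>_. {0..<int P})"
    unfolding \<phi>_def using P_gt_1 by auto
  ultimately have "card p_torsion \<le> card (PiE S (\<lambda>_. {0..<int P}))"
    using card_inj_on_le assms(1) by (metis finite_PiE finite_atLeastLessThan_int)
  then show ?thesis using assms(1) by (simp add: card_PiE)
qed

lemma scale_preimage_ratio_le_rank:
  assumes "x > 1" and "real h \<ge> real (Gi_rank p r \<alpha> i G) + of_int \<lceil>log 2 x\<rceil>"
  shows "real (card scale_preimage) / (real (card Ki) * real P ^ h) \<le> 1 / x"
proof -
  obtain S where S: "finite S" "card S = Gi_rank p r \<alpha> i G" "S \<subseteq> G" "Gi_span p r \<alpha> i S = G"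
    by (rule minimal_generating_set)
  have "card scale_preimage \<le> P ^ Gi_rank p r \<alpha> i G * card Ki"
    using card_scale_preimage_le card_p_torsion_le[OF S(1,3,4)] S(2)
    by (metis le_trans mult_le_mono1)
  then have "real (card scale_preimage) \<le> real P ^ Gi_rank p r \<alpha> i G * real (card Ki)"
    by (metis of_nat_le_iff of_nat_mult of_nat_power)
  then have "real (card scale_preimage) / (real (card Ki) * real P ^ h)
      \<le> real P ^ Gi_rank p r \<alpha> i G / real P ^ h"
    using card_Ki_pos P_gt_1 by (simp add: divide_le_eq field_simps)
  also have "\<dots> \<le> 1 / x"
    using power_ratio_le_inverse assms P_gt_1 by simp
  finally show ?thesis .
qed

lemma scale_preimage_ratio_le_length:
  assumes "x > 1" and "real h \<ge> real (plen P G) - real (plen P Ki) + of_int \<lceil>log 2 x\<rceil>"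
  shows "real (card scale_preimage) / (real (card Ki) * real P ^ h) \<le> 1 / x"
proof -
  define n where "n = (\<Sum>j<R. \<alpha> i j)"
  obtain e where e: "card Ki = P ^ e" using card_subgrp_prime_power[OF subgrp_Ki] .
  have "P ^ e \<le> P ^ n" using card_mono[OF finite_G Ki_subset_G] e card_G unfolding n_def by simp
  then have "e \<le> n" using P_gt_1 power_le_imp_le_exp by blast
  have "plen P G = n" "plen P Ki = e"
    using plen_eq[OF P_gt_1] card_G e unfolding n_def by simp_all
  then have h: "real h \<ge> real (n - e) + of_int \<lceil>log 2 x\<rceil>"
    using assms(2) \<open>e \<le> n\<close> by (simp add: of_nat_diff)
  have "real (card scale_preimage) \<le> real P ^ n"
    using card_scale_preimage_le_card_G card_G unfolding n_def by (metis of_nat_le_iff of_nat_power)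
  then have "real (card scale_preimage) / (real (card Ki) * real P ^ h) \<le> real P ^ n / (real P ^ e * real P ^ h)"
    using e P_gt_1 by (simp add: divide_right_mono)
  also have "\<dots> = real P ^ (n - e) / real P ^ h"
    using \<open>e \<le> n\<close> P_gt_1 by (simp add: power_diff)
  also have "\<dots> \<le> 1 / x"
    using power_ratio_le_inverse[OF _ assms(1) h] P_gt_1 by simp
  finally show ?thesis .
qed

lemma scale_preimage_ratio_le_eps:
  assumes eps: "0 < \<epsilon>" "\<epsilon> < 1" and m: "0 < m"
    and h: "real h \<ge> real (Gi_rank p r \<alpha> i G) + of_int \<lceil>log 2 (2 * real m / \<epsilon>)\<rceil>
      \<or> real h \<ge> real (plen P G) - real (plen P Ki) + of_int \<lceil>log 2 (real m / \<epsilon>)\<rceil>"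
  shows "real (card scale_preimage) / (real (card Ki) * real P ^ h) \<le> \<epsilon> / real m"
  using h
proof
  assume "real h \<ge> real (Gi_rank p r \<alpha> i G) + of_int \<lceil>log 2 (2 * real m / \<epsilon>)\<rceil>"
  moreover have "1 < 2 * real m / \<epsilon>" using eps m by (simp add: less_divide_eq)
  ultimately have "real (card scale_preimage) / (real (card Ki) * real P ^ h) \<le> 1 / (2 * real m / \<epsilon>)"
    by (intro scale_preimage_ratio_le_rank)
  also have "\<dots> \<le> \<epsilon> / real m" using eps m by (simp add: field_simps)
  finally show ?thesis .
next
  assume "real h \<ge> real (plen P G) - real (plen P Ki) + of_int \<lceil>log 2 (real m / \<epsilon>)\<rceil>"
  moreover have "1 < real m / \<epsilon>" using eps m by (simp add: less_divide_eq)
  ultimately have "real (card scale_preimage) / (real (card Ki) * real P ^ h) \<le> 1 / (real m / \<epsilon>)"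
    by (intro scale_preimage_ratio_le_length)
  then show ?thesis by simp
qed

end

section \<open>The measurement distribution\<close>

locale hiding_node = node_subgroup +
  fixes m :: nat and f :: "(nat \<Rightarrow> nat \<Rightarrow> int) \<Rightarrow> (nat \<Rightarrow> nat \<Rightarrow> int)"
  assumes f_node_in_Gfull: "x \<in> G \<Longrightarrow> f_node f i x \<in> Gfull p r \<alpha> m"
    and f_node_eq_iff: "x \<in> G \<Longrightarrow> x' \<in> G \<Longrightarrow> f_node f i x' = f_node f i x \<longleftrightarrow> add x' (neg x) \<in> Ki"
begin

abbreviation "fi \<equiv> f_node f i"

definition fibre_sum :: "(nat \<Rightarrow> int) \<Rightarrow> (nat \<Rightarrow> nat \<Rightarrow> int) \<Rightarrow> complex" where
  "fibre_sum y b = (\<Sum>x\<in>G. if fi x = b then cnj (character y x) else 0)"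

lemma fibre_eq_coset:
  assumes x: "x \<in> G"
  shows "{x' \<in> G. fi x' = fi x} = add x ` Ki"
proof
  show "{x' \<in> G. fi x' = fi x} \<subseteq> add x ` Ki"
  proof
    fix x' assume x': "x' \<in> {x' \<in> G. fi x' = fi x}"
    then have "add x (add x' (neg x)) = x'"
      using add_commute[of x' "neg x"] add_neg_cancel_left by simp
    moreover have "add x' (neg x) \<in> Ki" using x' f_node_eq_iff x by auto
    ultimately show "x' \<in> add x ` Ki" by (metis image_eqI)
  qed
  show "add x ` Ki \<subseteq> {x' \<in> G. fi x' = fi x}"
  proof
    fix x' assume "x' \<in> add x ` Ki"
    then obtain k where k: "k \<in> Ki" "x' = add x k" by blast
    then have "k \<in> G" using Ki_subset_G by auto
    then have "x' \<in> G" and "add x' (neg x) = k"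
      using k x add_in_G by (simp_all only: add_commute[of x k] add_assoc add_neg add_zero)
    then show "x' \<in> {x' \<in> G. fi x' = fi x}" using f_node_eq_iff x k by auto
  qed
qed

lemma out_state_eq: "out_state p r \<alpha> m f i (y, b) = of_real (qft_norm ^ 2) * fibre_sum y b"
proof -
  have U: "U_f p r \<alpha> m i fi (qft_I p r \<alpha> i init_state) (x, b)
      = (if x \<in> G \<and> b = fi x then of_real qft_norm else 0)" for x
  proof (cases "x \<in> G \<and> b \<in> Gfull p r \<alpha> m")
    case True
    then show ?thesis using g_diff_eq_0_iff[of b p r \<alpha> m "fi x"] f_node_in_Gfull
      unfolding U_f_def qft_I_init_state by auto
  next
    case False
    then show ?thesis using f_node_in_Gfull unfolding U_f_def by auto
  qed
  have "out_state p r \<alpha> m f i (y, b)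
      = (\<Sum>x\<in>G. cnj (qftGi_entry p r \<alpha> i y x) * U_f p r \<alpha> m i fi (qft_I p r \<alpha> i init_state) (x, b))"
    unfolding out_state_def qft_dag_I_def by simp
  also have "\<dots> = (\<Sum>x\<in>G. of_real (qft_norm ^ 2) * (if fi x = b then cnj (character y x) else 0))"
    by (intro sum.cong) (auto simp: U qftGi_entry_eq power2_eq_square)
  finally show ?thesis unfolding fibre_sum_def sum_distrib_left .
qed

lemma sum_fibre_character:
  assumes x: "x \<in> G"
  shows "(\<Sum>x'\<in>G. if fi x' = fi x then cnj (character y x) * character y x' else 0)
    = (\<Sum>k\<in>Ki. character y k)"
proof -
  have "(\<Sum>x'\<in>G. if fi x' = fi x then cnj (character y x) * character y x' else 0)
      = (\<Sum>x'\<in>{x' \<in> G. fi x' = fi x}. cnj (character y x) * character y x')"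
    using finite_G by (simp add: sum.inter_filter)
  also have "\<dots> = (\<Sum>k\<in>Ki. cnj (character y x) * character y (add x k))"
    unfolding fibre_eq_coset[OF x]
    by (rule sum.reindex[OF inj_on_add[OF Ki_subset_G], unfolded comp_def])
  also have "\<dots> = (\<Sum>k\<in>Ki. character y k)"
    by (simp add: character_add cnj_character_mult mult.assoc[symmetric])
  finally show ?thesis .
qed

lemma sum_fibre_sum_norm:
  "(\<Sum>b\<in>Gfull p r \<alpha> m. fibre_sum y b * cnj (fibre_sum y b))
     = of_nat (card G) * (if \<forall>k\<in>Ki. orth y k then of_nat (card Ki) else 0)"
proof -
  let ?F = "Gfull p r \<alpha> m"
  let ?c = "\<lambda>x b. if fi x = b then character y x else 0"
  have delta: "(\<Sum>b\<in>?F. cnj (?c x b) * ?c x' b)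
      = (if fi x' = fi x then cnj (character y x) * character y x' else 0)" if x: "x \<in> G" for x x'
  proof -
    have "(\<Sum>b\<in>?F. cnj (?c x b) * ?c x' b)
        = (\<Sum>b\<in>?F. if b = fi x then (if fi x' = fi x then cnj (character y x) * character y x' else 0) else 0)"
      by (rule sum.cong[OF refl]) auto
    also have "\<dots> = (if fi x' = fi x then cnj (character y x) * character y x' else 0)"
      using f_node_in_Gfull[OF x] finite_Gfull by (simp add: sum.delta')
    finally show ?thesis .
  qed
  have "(\<Sum>b\<in>?F. fibre_sum y b * cnj (fibre_sum y b)) = (\<Sum>b\<in>?F. \<Sum>x\<in>G. \<Sum>x'\<in>G. cnj (?c x b) * ?c x' b)"
    unfolding fibre_sum_def cnj_sum sum_product by (intro sum.cong refl) auto
  also have "\<dots> = (\<Sum>x\<in>G. \<Sum>x'\<in>G. \<Sum>b\<in>?F. cnj (?c x b) * ?c x' b)"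
    by (subst sum.swap) (rule sum.cong[OF refl], rule sum.swap)
  also have "\<dots> = (\<Sum>x\<in>G. \<Sum>k\<in>Ki. character y k)"
    by (rule sum.cong[OF refl]) (simp add: delta sum_fibre_character)
  also have "\<dots> = of_nat (card G) * (if \<forall>k\<in>Ki. orth y k then of_nat (card Ki) else 0)"
    using sum_character_subgrp[OF subgrp_Ki, of y] by simp
  finally show ?thesis .
qed

lemma meas_prob_eq:
  assumes "y \<in> G"
  shows "meas_prob p r \<alpha> m f i y = (if y \<in> H then real (card Ki) / real (card G) else 0)"
proof -
  let ?F = "Gfull p r \<alpha> m"
  have "complex_of_real (meas_prob p r \<alpha> m f i y)
      = (\<Sum>b\<in>?F. of_real (qft_norm ^ 2 * qft_norm ^ 2) * (fibre_sum y b * cnj (fibre_sum y b)))"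
    unfolding meas_prob_def of_real_sum complex_norm_square out_state_eq
    by (intro sum.cong refl) (simp add: mult_ac)
  also have "\<dots> = of_real (qft_norm ^ 2 * qft_norm ^ 2)
      * (of_nat (card G) * (if \<forall>k\<in>Ki. orth y k then of_nat (card Ki) else 0))"
    unfolding sum_distrib_left[symmetric] sum_fibre_sum_norm ..
  also have "\<dots> = complex_of_real (qft_norm ^ 2 * qft_norm ^ 2
      * (real (card G) * (if \<forall>k\<in>Ki. orth y k then real (card Ki) else 0)))"
    by simp
  finally have "meas_prob p r \<alpha> m f i y = qft_norm ^ 2 * qft_norm ^ 2
      * (real (card G) * (if \<forall>k\<in>Ki. orth y k then real (card Ki) else 0))"
    by (simp only: of_real_eq_iff)
  moreover have "(\<forall>k\<in>Ki. orth y k) \<longleftrightarrow> y \<in> H"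
    unfolding annihilator_def using assms orth_commute by auto
  ultimately show ?thesis
    using card_G_pos unfolding qft_norm_sq by (auto simp: field_simps)
qed

lemma prod_list_meas_prob:
  "set ms \<subseteq> G \<Longrightarrow> prod_list (map (meas_prob p r \<alpha> m f i) ms)
     = (if set ms \<subseteq> H then (real (card Ki) / real (card G)) ^ length ms else 0)"
  by (induction ms) (auto simp: meas_prob_eq)

lemma success_prob_eq:
  assumes "K_node p r \<alpha> K i = Ki"
  shows "success_prob p r \<alpha> m f K i h = 1 - real (card (bad_lists h)) / real (card H) ^ h"
proof -
  define q where "q = real (card Ki) / real (card G)"
  define SL where "SL = {ms. length ms = h \<and> set ms \<subseteq> G \<and> A_set p r \<alpha> i ms = K_node p r \<alpha> K i}"
  define good where "good = {ms. length ms = h \<and> set ms \<subseteq> H \<and> annihilator (set ms) = Ki}"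
  have finite_SL: "finite SL"
    by (rule finite_subset[OF _ finite_lists_length_eq[OF finite_G, of h]]) (auto simp: SL_def)
  have A_set_eq: "A_set p r \<alpha> i ms = annihilator (set ms)" for ms
    unfolding A_set_def annihilator_def ip_eq_0_iff_orth ..
  have "success_prob p r \<alpha> m f K i h = (\<Sum>ms\<in>SL. if set ms \<subseteq> H then q ^ h else 0)"
    unfolding success_prob_def SL_def[symmetric] q_def
    by (intro sum.cong refl) (auto simp: SL_def prod_list_meas_prob)
  also have "\<dots> = (\<Sum>ms\<in>{ms \<in> SL. set ms \<subseteq> H}. q ^ h)"
    by (rule sum.inter_filter[OF finite_SL, symmetric])
  also have "{ms \<in> SL. set ms \<subseteq> H} = good"
    unfolding SL_def good_def A_set_eq assms annihilator_def by auto
  finally have success: "success_prob p r \<alpha> m f K i h = real (card good) * q ^ h" by simp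
  have "finite good"
    by (rule finite_subset[OF _ finite_lists_length_eq[OF finite_H, of h]]) (auto simp: good_def)
  have "card H ^ h = card {ms. set ms \<subseteq> H \<and> length ms = h}"
    using card_lists_length_eq[OF finite_H] by simp
  also have "{ms. set ms \<subseteq> H \<and> length ms = h} = good \<union> bad_lists h"
    unfolding good_def bad_lists_def by auto
  also have "card (good \<union> bad_lists h) = card good + card (bad_lists h)"
    using \<open>finite good\<close> finite_bad_lists
    by (intro card_Un_disjoint) (auto simp: good_def bad_lists_def)
  finally have "real (card good) = real (card H) ^ h - real (card (bad_lists h))"
    by (simp flip: of_nat_power)
  moreover have "q = 1 / real (card H)"
    unfolding q_def using card_Ki_mult_card_H[symmetric] card_Ki_pos by (simp add: field_simps)
  ultimately show ?thesis
    unfolding success using card_H_pos by (simp add: power_one_over diff_divide_distrib)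
qed

lemma success_prob_ge:
  assumes "K_node p r \<alpha> K i = Ki"
  shows "success_prob p r \<alpha> m f K i h \<ge> 1 - real (card scale_preimage) / (real (card Ki) * real P ^ h)"
  using success_prob_eq[OF assms, of h] bad_lists_fraction_le[of h] by linarith

end

lemma (in prime_node) hiding_node_K_node:
  assumes K: "is_subgrp (Gfull p r \<alpha> m) (g_add p \<alpha>) (g_neg p \<alpha>) (\<lambda>_ _. 0) K"
    and maps: "\<forall>x\<in>Gfull p r \<alpha> m. f x \<in> Gfull p r \<alpha> m"
    and hides: "\<forall>x\<in>Gfull p r \<alpha> m. \<forall>y\<in>Gfull p r \<alpha> m. f x = f y \<longleftrightarrow> g_diff p \<alpha> x y \<in> K"
    and "i < m" and "\<forall>k<m. p k > 0"
  shows "hiding_node p r \<alpha> i (K_node p r \<alpha> K i) m f"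
proof unfold_locales
  show "subgrp (K_node p r \<alpha> K i)" by (rule subgrp_K_node[OF K])
  show "f_node f i x \<in> Gfull p r \<alpha> m" if "x \<in> G" for x
    using maps embed_in_Gfull[OF that assms(4,5)] unfolding f_node_def by blast
  show "f_node f i x' = f_node f i x \<longleftrightarrow> add x' (neg x) \<in> K_node p r \<alpha> K i"
    if "x \<in> G" "x' \<in> G" for x x'
    by (rule f_node_eq_iff_K_node[OF hides assms(4,5) that])
qed

theorem theorem8:
  fixes m :: nat and p r :: "nat \<Rightarrow> nat" and \<alpha> :: "nat \<Rightarrow> nat \<Rightarrow> nat"
    and K :: "(nat \<Rightarrow> nat \<Rightarrow> int) set" and f :: "(nat \<Rightarrow> nat \<Rightarrow> int) \<Rightarrow> (nat \<Rightarrow> nat \<Rightarrow> int)"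
    and i h :: nat and \<epsilon> :: real
  assumes primes: "\<forall>k<m. prime (p k)"
    and distinct_primes: "inj_on p {..<m}"
    and alpha_pos: "\<forall>k<m. \<forall>j<r k. 1 \<le> \<alpha> k j"
    and K_subgroup: "is_subgrp (Gfull p r \<alpha> m) (g_add p \<alpha>) (g_neg p \<alpha>) (\<lambda>_ _. 0) K"
    and f_maps: "\<forall>x\<in>Gfull p r \<alpha> m. f x \<in> Gfull p r \<alpha> m"
    and f_hides: "\<forall>x\<in>Gfull p r \<alpha> m. \<forall>y\<in>Gfull p r \<alpha> m. f x = f y \<longleftrightarrow> g_diff p \<alpha> x y \<in> K"
    and i_node: "i < m"
    and eps: "0 < \<epsilon>" "\<epsilon> < 1"
    and h_bound: "real h \<ge> real (Gi_rank p r \<alpha> i (Gi p r \<alpha> i)) + of_int \<lceil>log 2 (2 * real m / \<epsilon>)\<rceil>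
      \<or> real h \<ge> real (plen (p i) (Gi p r \<alpha> i)) - real (plen (p i) (K_node p r \<alpha> K i))
                  + of_int \<lceil>log 2 (real m / \<epsilon>)\<rceil>"
  shows "success_prob p r \<alpha> m f K i h \<ge> 1 - \<epsilon> / real m"
proof -
  have p_pos: "\<forall>k<m. p k > 0" using primes prime_gt_0_nat by blast
  interpret prime_node p r \<alpha> i
    using primes alpha_pos i_node by unfold_locales auto
  interpret hiding_node p r \<alpha> i "K_node p r \<alpha> K i" m f
    by (rule hiding_node_K_node[OF K_subgroup f_maps f_hides i_node p_pos])
  have "success_prob p r \<alpha> m f K i h
      \<ge> 1 - real (card scale_preimage) / (real (card (K_node p r \<alpha> K i)) * real (p i) ^ h)"
    by (rule success_prob_ge) (rule refl)
  moreover have "real (card scale_preimage) / (real (card (K_node p r \<alpha> K i)) * real (p i) ^ h)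
      \<le> \<epsilon> / real m"
    using scale_preimage_ratio_le_eps[OF eps _ h_bound] i_node by simp
  ultimately show ?thesis by linarith
qed

end
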